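(* Let $(\mathbb{Z}_{(p_n)},+\mathbf{1})$ and $(\mathbb{Z}_{(q_n)},+\mathbf{1})$ be torsion free odometers with scales $(p_n)$ and $(q_n)$ respectively. If $\operatorname{Aut}^{(\infty)}(\mathbb{Z}_{(p_n)},+\mathbf{1})$ and $\operatorname{Aut}^{(\infty)}(\mathbb{Z}_{(q_n)},+\mathbf{1})$ are isomorphic as groups, then $\mathbb{Z}_{(p_n)}$ and $\mathbb{Z}_{(q_n)}$ are isomorphic as groups.
   Context: A scale is a sequence $(p_n)$ of positive integers with $p_n\mid p_{n+1}$, not eventually constant; the odometer is $\mathbb{Z}_{(p_n)}=\{(x_n)\in\prod_n\mathbb{Z}/p_n\mathbb{Z}: x_{n+1}\equiv x_n\bmod p_n\}$, and $+\mathbf{1}$ is translation by $\mathbf{1}=(1,1,\dots)$. For a prime $p$, $\nu_p(n)$ is the $p$-adic valuation and $\mathbf{v}_p((p_n))=\lim_n\nu_p(p_n)\in\mathbb{N}\cup\{0,\infty\}$. The odometer (or scale) is torsion free if $\mathbf{v}_p((p_n))\in\{0,\infty\}$ for every prime $p$. For a homeomorphism $T$ of a compact metric space $X$, $\operatorname{Aut}(X,T)$ is the group of homeomorphisms commuting with $T$ and $\operatorname{Aut}^{(\infty)}(X,T)=\bigcup_{n\ge1}\operatorname{Aut}(X,T^n)\subseteq\operatorname{Homeo}(X)$. *)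

theory Defs
  imports "HOL-Analysis.Analysis" "HOL-Algebra.Bij" "HOL-Library.Extended_Nat"
begin

definition is_scale :: "(nat \<Rightarrow> nat) \<Rightarrow> bool" where
  "is_scale p \<longleftrightarrow> (\<forall>n. 0 < p n) \<and> (\<forall>n. p n dvd p (Suc n)) \<and>
                   \<not> (\<exists>N. \<forall>n\<ge>N. p n = p N)"

text \<open>The odometer, elements of Z/p_n Z represented by residues in 0..<p_n.\<close>
definition odometer :: "(nat \<Rightarrow> nat) \<Rightarrow> (nat \<Rightarrow> nat) set" where
  "odometer p = {x. \<forall>n. x n < p n \<and> x (Suc n) mod p n = x n}"

definition odo_add :: "(nat \<Rightarrow> nat) \<Rightarrow> (nat \<Rightarrow> nat) \<Rightarrow> (nat \<Rightarrow> nat) \<Rightarrow> (nat \<Rightarrow> nat)" where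
  "odo_add p x y = (\<lambda>n. (x n + y n) mod p n)"

definition odo_one :: "(nat \<Rightarrow> nat) \<Rightarrow> (nat \<Rightarrow> nat)" where
  "odo_one p = (\<lambda>n. 1 mod p n)"

definition odo_group :: "(nat \<Rightarrow> nat) \<Rightarrow> (nat \<Rightarrow> nat) monoid" where
  "odo_group p = \<lparr>carrier = odometer p, monoid.mult = odo_add p, one = (\<lambda>n. 0)\<rparr>"

definition odo_plus1 :: "(nat \<Rightarrow> nat) \<Rightarrow> (nat \<Rightarrow> nat) \<Rightarrow> (nat \<Rightarrow> nat)" where
  "odo_plus1 p x = odo_add p x (odo_one p)"

text \<open>v_p((p_n)) = lim nu_r(p_n), a monotone limit, hence the supremum in enat.\<close>
definition scale_val :: "nat \<Rightarrow> (nat \<Rightarrow> nat) \<Rightarrow> enat" where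
  "scale_val r p = (SUP n. enat (multiplicity r (p n)))"

definition torsion_free :: "(nat \<Rightarrow> nat) \<Rightarrow> bool" where
  "torsion_free p \<longleftrightarrow> (\<forall>r. Factorial_Ring.prime r \<longrightarrow> scale_val r p \<in> {0, \<infinity>})"

text \<open>Homeo(X) inside the bijection group on X (product topology on nat => nat,
  nat discrete), and Aut^(infty)(X,T) = union of the Aut(X,T^n), n >= 1.\<close>
definition Aut_inf :: "('a::topological_space) set \<Rightarrow> ('a \<Rightarrow> 'a) \<Rightarrow> ('a \<Rightarrow> 'a) set" where
  "Aut_inf X T = {f \<in> Bij X. (\<exists>g. homeomorphism X X f g) \<and>
       (\<exists>n\<ge>1. \<forall>x\<in>X. f ((T ^^ n) x) = (T ^^ n) (f x))}"

definition Aut_inf_group :: "('a::topological_space) set \<Rightarrow> ('a \<Rightarrow> 'a) \<Rightarrow> ('a \<Rightarrow> 'a) monoid" where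
  "Aut_inf_group X T = (BijGroup X)\<lparr>carrier := Aut_inf X T\<rparr>"

end

theory Submission
  imports Defs "HOL-Number_Theory.Cong"
begin

text \<open>
  For a prime \<open>r\<close>, whether some \<open>r\<close>-th power in a group has an abelian centralizer is an
  isomorphism invariant. In the group of homeomorphisms of an odometer that commute with some
  power of \<open>+1\<close>, it detects whether \<open>r\<close> divides the scale.

  If \<open>r\<close> divides no \<open>p n\<close>, then \<open>r\<close> is invertible in the odometer, the translation \<open>h\<close> by
  \<open>1/r\<close> satisfies \<open>h^r = +1\<close>, and every homeomorphism commuting with \<open>+1\<close> is a translation.

  If every power of \<open>r\<close> divides some \<open>p n\<close>, let \<open>h\<close> commute with \<open>(+1)^k\<close> and choose a level
  \<open>m\<close> beyond which \<open>gcd k (p M)\<close> is constant and such that \<open>r^(v+1)\<close> divides \<open>p m\<close>, where \<open>v\<close>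
  is the multiplicity of \<open>r\<close> in \<open>k\<close>. By continuity \<open>h\<close> acts on the \<open>m\<close>-th coordinate by a
  permutation \<open>\<sigma>\<close> of the residues mod \<open>p m\<close> that commutes with \<open>+k\<close>. Adding \<open>k * p m\<close> to
  exactly those points whose \<open>m\<close>-th coordinate lies in the \<open>\<sigma>^r\<close>-orbit of \<open>0\<close> commutes with
  \<open>h^r\<close>. If it also commuted with \<open>h\<close> and with \<open>(+1)^k\<close>, then \<open>\<sigma> 0\<close> and \<open>k\<close> would lie in
  that orbit, so \<open>\<sigma>^N 0 = 0\<close> for some \<open>N\<close> prime to \<open>r\<close> and \<open>p m\<close> would divide \<open>N * k\<close>,
  which the choice of \<open>m\<close> forbids.

  So isomorphic groups come from scales with the same prime divisors. For torsion free scales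
  this makes every \<open>p n\<close> divide some \<open>q m\<close> and vice versa, and reading off coordinates along
  these divisibilities is an isomorphism of the odometers.
\<close>

section \<open>Continuity on products of discrete spaces\<close>

lemma continuous_on_fun_coordinate_locally_finite:
  fixes f :: "('i \<Rightarrow> 'a::topological_space) \<Rightarrow> 'j \<Rightarrow> 'b::discrete_topology"
  assumes "continuous_on S f" "x \<in> S"
  obtains F where "finite F" "\<And>z. z \<in> S \<Longrightarrow> (\<forall>i\<in>F. z i = x i) \<Longrightarrow> f z m = f x m"
proof -
  have "open ((\<lambda>u. u m) -` {f x m})"
    by (intro open_vimage) (auto simp: open_discrete)
  then obtain A where A: "open A" "A \<inter> S = f -` ((\<lambda>u. u m) -` {f x m}) \<inter> S"
    using assms(1) unfolding continuous_on_open_invariant by blast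
  have "openin (product_topology (\<lambda>i. euclidean) UNIV) A" "x \<in> A"
    using A assms(2) by (auto simp: open_fun_def)
  from product_topology_open_contains_basis[OF this]
  obtain U where U: "x \<in> (\<Pi>\<^sub>E i\<in>UNIV. U i)" "finite {i. U i \<noteq> UNIV}" "(\<Pi>\<^sub>E i\<in>UNIV. U i) \<subseteq> A"
    by auto
  show ?thesis
  proof
    show "finite {i. U i \<noteq> UNIV}" by (fact U(2))
    fix z assume "z \<in> S" "\<forall>i\<in>{i. U i \<noteq> UNIV}. z i = x i"
    then have "z \<in> A" "z \<in> S"
      using U(1,3) by (fastforce simp: PiE_iff)+
    then show "f z m = f x m" using A(2) by auto
  qed
qed

definition coord_determined :: "('i \<Rightarrow> 'a) set \<Rightarrow> (('i \<Rightarrow> 'a) \<Rightarrow> 'j \<Rightarrow> 'b) \<Rightarrow> bool" where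
  "coord_determined S f \<longleftrightarrow> (\<forall>n. \<exists>N. \<forall>x\<in>S. \<forall>y\<in>S. x N = y N \<longrightarrow> f x n = f y n)"

lemma continuous_on_coord_determined:
  fixes f :: "('i \<Rightarrow> 'a::discrete_topology) \<Rightarrow> 'j \<Rightarrow> 'b::topological_space"
  assumes "coord_determined S f"
  shows "continuous_on S f"
proof (rule continuous_on_coordinatewise_then_product)
  fix n
  obtain N where N: "\<forall>x\<in>S. \<forall>y\<in>S. x N = y N \<longrightarrow> f x n = f y n"
    using assms unfolding coord_determined_def by blast
  define g where "g a = f (SOME y. y \<in> S \<and> y N = a) n" for a
  have "f x n = g (x N)" if "x \<in> S" for x
    using someI[of "\<lambda>y. y \<in> S \<and> y N = x N" x] N that unfolding g_def by metis
  moreover have "continuous_on UNIV g"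
    by (auto simp: continuous_on_open_vimage open_discrete)
  then have "continuous_on S (\<lambda>x. g (x N))"
    by (rule continuous_on_compose2[OF _ continuous_on_subset[OF continuous_on_product_coordinates]]) auto
  ultimately show "continuous_on S (\<lambda>x. f x n)"
    by (metis (no_types, lifting) continuous_on_cong)
qed

section \<open>The group of eventually commuting homeomorphisms\<close>

lemma funpow_closed: "F ` X \<subseteq> X \<Longrightarrow> z \<in> X \<Longrightarrow> (F ^^ n) z \<in> X"
  by (induction n) auto

lemma commute_on_funpow:
  assumes "\<And>z. z \<in> X \<Longrightarrow> f (F z) = F (f z)" "F ` X \<subseteq> X" "z \<in> X"
  shows "f ((F ^^ n) z) = (F ^^ n) (f z)"
proof (induction n)
  case (Suc n)
  then show ?case using assms funpow_closed[OF assms(2,3)] by simp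
qed simp

lemma restrict_funpow: "f ` X \<subseteq> X \<Longrightarrow> x \<in> X \<Longrightarrow> (restrict f X ^^ n) x = (f ^^ n) x"
  by (induction n) (auto simp: funpow_closed)

lemma funpow_swap: "(f ^^ a) ((f ^^ b) x) = (f ^^ b) ((f ^^ a) x)"
  by (metis comp_apply funpow_add add.commute)

lemma Aut_inf_inv_closed:
  assumes TX: "T ` X \<subseteq> X" and a: "a \<in> Aut_inf X T"
  shows "restrict (inv_into X a) X \<in> Aut_inf X T"
proof -
  obtain g n where ab: "a \<in> Bij X" and hg: "homeomorphism X X a g" and n: "n \<ge> 1"
    and cm: "\<forall>x\<in>X. a ((T ^^ n) x) = (T ^^ n) (a x)"
    using a unfolding Aut_inf_def by blast
  have bij: "bij_betw a X X" using ab unfolding Bij_def by blast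
  have ginv: "inv_into X a y = g y" if "y \<in> X" for y
    using hg bij that unfolding homeomorphism_def by (metis bij_betw_inv_into_left image_eqI)
  have "restrict (inv_into X a) X ((T ^^ n) x) = (T ^^ n) (restrict (inv_into X a) X x)"
    if x: "x \<in> X" for x
  proof -
    define w where "w = inv_into X a x"
    have w: "w \<in> X" "a w = x"
      using bij x unfolding w_def by (auto simp: bij_betw_def inv_into_into f_inv_into_f)
    then have "a ((T ^^ n) w) = (T ^^ n) x" using cm by simp
    then have "inv_into X a ((T ^^ n) x) = (T ^^ n) w"
      using bij funpow_closed[OF TX] w(1) by (metis bij_betw_inv_into_left)
    then show ?thesis using x funpow_closed[OF TX x] w_def by simp
  qed
  moreover have "homeomorphism X X (restrict (inv_into X a) X) a"
    by (rule homeomorphism_cong[OF homeomorphism_symD[OF hg]]) (auto simp: ginv)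
  ultimately show ?thesis
    unfolding Aut_inf_def using restrict_inv_into_Bij[OF ab] n by blast
qed

lemma Aut_inf_compose_closed:
  assumes TX: "T ` X \<subseteq> X" and a: "a \<in> Aut_inf X T" and b: "b \<in> Aut_inf X T"
  shows "compose X a b \<in> Aut_inf X T"
proof -
  obtain ga na where ab: "a \<in> Bij X" and hga: "homeomorphism X X a ga" and na: "na \<ge> 1"
    and cma: "\<forall>x\<in>X. a ((T ^^ na) x) = (T ^^ na) (a x)"
    using a unfolding Aut_inf_def by blast
  obtain gb nb where bb: "b \<in> Bij X" and hgb: "homeomorphism X X b gb" and nb: "nb \<ge> 1"
    and cmb: "\<forall>x\<in>X. b ((T ^^ nb) x) = (T ^^ nb) (b x)"
    using b unfolding Aut_inf_def by blast
  have bX: "b x \<in> X" if "x \<in> X" for x using Bij_imp_funcset[OF bb] that by auto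
  have TnX: "(T ^^ n) ` X \<subseteq> X" for n using funpow_closed[OF TX] by blast
  have "a (((T ^^ na) ^^ nb) z) = ((T ^^ na) ^^ nb) (a z)" if "z \<in> X" for z
    by (rule commute_on_funpow) (use cma TnX that in auto)
  moreover have "b (((T ^^ nb) ^^ na) z) = ((T ^^ nb) ^^ na) (b z)" if "z \<in> X" for z
    by (rule commute_on_funpow) (use cmb TnX that in auto)
  ultimately have "compose X a b ((T ^^ (na * nb)) x) = (T ^^ (na * nb)) (compose X a b x)"
    if "x \<in> X" for x
    using that bX funpow_closed[OF TX that]
    by (simp add: compose_def funpow_mult mult.commute[of nb na])
  moreover have "homeomorphism X X (compose X a b) (gb \<circ> ga)"
    by (rule homeomorphism_cong[OF homeomorphism_compose[OF hgb hga]]) (auto simp: compose_def)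
  ultimately show ?thesis
    unfolding Aut_inf_def using compose_Bij[OF ab bb] na nb
    by (intro CollectI conjI exI[of _ "na * nb"]) auto
qed

lemma subgroup_Aut_inf:
  assumes TX: "T ` X \<subseteq> X"
  shows "subgroup (Aut_inf X T) (BijGroup X)"
proof (rule group.subgroupI[OF group_BijGroup])
  show "Aut_inf X T \<subseteq> carrier (BijGroup X)"
    unfolding Aut_inf_def BijGroup_def by auto
  have "homeomorphism X X (\<lambda>x\<in>X. x) (\<lambda>x. x)"
    by (rule homeomorphism_cong[OF homeomorphism_ident]) auto
  then have "(\<lambda>x\<in>X. x) \<in> Aut_inf X T"
    unfolding Aut_inf_def using id_Bij TX by (intro CollectI conjI exI[of _ 1]) auto
  then show "Aut_inf X T \<noteq> {}" by blast
  show "inv\<^bsub>BijGroup X\<^esub> a \<in> Aut_inf X T" if "a \<in> Aut_inf X T" for a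
    using that Aut_inf_inv_closed[OF TX] inv_BijGroup[of a X] unfolding Aut_inf_def by auto
  show "a \<otimes>\<^bsub>BijGroup X\<^esub> b \<in> Aut_inf X T" if "a \<in> Aut_inf X T" "b \<in> Aut_inf X T" for a b
    using that Aut_inf_compose_closed[OF TX] unfolding BijGroup_def Aut_inf_def by auto
qed

lemma group_Aut_inf_group:
  "T ` X \<subseteq> X \<Longrightarrow> group (Aut_inf_group X T)"
  unfolding Aut_inf_group_def
  by (rule subgroup.subgroup_is_group[OF subgroup_Aut_inf group_BijGroup])

lemma Aut_inf_group_mult:
  "f \<in> carrier (Aut_inf_group X T) \<Longrightarrow> g \<in> carrier (Aut_inf_group X T) \<Longrightarrow>
   f \<otimes>\<^bsub>Aut_inf_group X T\<^esub> g = compose X f g"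
  unfolding Aut_inf_group_def Aut_inf_def BijGroup_def by auto

lemma Aut_inf_group_carrierE:
  assumes "u \<in> carrier (Aut_inf_group X T)"
  obtains k where "bij_betw u X X" "continuous_on X u" "k \<ge> 1"
    "\<And>x. x \<in> X \<Longrightarrow> u ((T ^^ k) x) = (T ^^ k) (u x)"
  using assms unfolding Aut_inf_group_def Aut_inf_def Bij_def homeomorphism_def by auto

lemma Aut_inf_group_carrier_in:
  "u \<in> carrier (Aut_inf_group X T) \<Longrightarrow> x \<in> X \<Longrightarrow> u x \<in> X"
  by (metis Aut_inf_group_carrierE bij_betwE)

lemma Aut_inf_group_nat_pow:
  assumes "f \<in> carrier (Aut_inf_group X T)" and TX: "T ` X \<subseteq> X"
  shows "f [^]\<^bsub>Aut_inf_group X T\<^esub> (n::nat) = restrict (f ^^ n) X"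
proof (induction n)
  case 0
  then show ?case unfolding Aut_inf_group_def BijGroup_def by simp
next
  case (Suc n)
  have fX: "f x \<in> X" if "x \<in> X" for x
    using assms(1) that by (elim Aut_inf_group_carrierE) (auto simp: bij_betw_def)
  have "f [^]\<^bsub>Aut_inf_group X T\<^esub> Suc n = compose X (restrict (f ^^ n) X) f"
    using Aut_inf_group_mult assms monoid.nat_pow_closed[OF group.is_monoid[OF group_Aut_inf_group[OF TX]]]
    by (metis Suc.IH nat_pow_Suc)
  also have "\<dots> = restrict (f ^^ Suc n) X"
    using fX by (auto simp: compose_def funpow_Suc_right simp del: funpow.simps)
  finally show ?case .
qed

lemma Aut_inf_group_commute_iff:
  assumes "u \<in> carrier (Aut_inf_group X T)" "v \<in> carrier (Aut_inf_group X T)"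
  shows "u \<otimes>\<^bsub>Aut_inf_group X T\<^esub> v = v \<otimes>\<^bsub>Aut_inf_group X T\<^esub> u \<longleftrightarrow>
    (\<forall>x\<in>X. u (v x) = v (u x))"
proof -
  have "compose X u v = compose X v u \<longleftrightarrow> (\<forall>x\<in>X. u (v x) = v (u x))"
  proof
    show "\<forall>x\<in>X. u (v x) = v (u x)" if eq: "compose X u v = compose X v u"
    proof
      fix x assume "x \<in> X"
      with fun_cong[OF eq, of x] show "u (v x) = v (u x)" by (simp add: compose_def)
    qed
  qed (auto simp: compose_def intro: restrict_ext)
  with assms show ?thesis by (simp add: Aut_inf_group_mult)
qed

lemma Aut_inf_group_memI:
  fixes f g :: "('i \<Rightarrow> 'a::discrete_topology) \<Rightarrow> 'i \<Rightarrow> 'a"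
  assumes TX: "T ` X \<subseteq> X" and fX: "f ` X \<subseteq> X" and gX: "g ` X \<subseteq> X"
    and gf: "\<And>x. x \<in> X \<Longrightarrow> g (f x) = x" and fg: "\<And>x. x \<in> X \<Longrightarrow> f (g x) = x"
    and "coord_determined X f" "coord_determined X g"
    and k: "k \<ge> 1" and fT: "\<And>x. x \<in> X \<Longrightarrow> f ((T ^^ k) x) = (T ^^ k) (f x)"
  shows "restrict f X \<in> carrier (Aut_inf_group X T)"
proof -
  have "continuous_on X f" "continuous_on X g"
    using assms(6,7) by (simp_all add: continuous_on_coord_determined)
  then have "homeomorphism X X f g"
    using fX gX gf fg by (intro homeomorphismI) auto
  then have "homeomorphism X X (restrict f X) g"
    by (rule homeomorphism_cong) auto
  moreover have "bij_betw f X X"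
    using fX gX gf fg by (intro bij_betw_byWitness[of X g]) simp_all
  then have "restrict f X \<in> Bij X"
    unfolding Bij_def by simp
  moreover have "\<forall>x\<in>X. restrict f X ((T ^^ k) x) = (T ^^ k) (restrict f X x)"
    using fT funpow_closed[OF TX] by simp
  ultimately have "restrict f X \<in> Aut_inf X T"
    unfolding Aut_inf_def using k by blast
  then show ?thesis
    unfolding Aut_inf_group_def by simp
qed

section \<open>Centralizers of powers\<close>

definition abelian_centralizer :: "('g, 'b) monoid_scheme \<Rightarrow> 'g \<Rightarrow> bool" where
  "abelian_centralizer G g \<longleftrightarrow> (\<forall>u\<in>carrier G. \<forall>v\<in>carrier G.
      u \<otimes>\<^bsub>G\<^esub> g = g \<otimes>\<^bsub>G\<^esub> u \<longrightarrow> v \<otimes>\<^bsub>G\<^esub> g = g \<otimes>\<^bsub>G\<^esub> v \<longrightarrow>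
      u \<otimes>\<^bsub>G\<^esub> v = v \<otimes>\<^bsub>G\<^esub> u)"

definition abelian_power_centralizer :: "nat \<Rightarrow> ('g, 'b) monoid_scheme \<Rightarrow> bool" where
  "abelian_power_centralizer r G \<longleftrightarrow> (\<exists>h\<in>carrier G. abelian_centralizer G (h [^]\<^bsub>G\<^esub> r))"

lemma iso_commute_iff:
  assumes "\<phi> \<in> iso G H" "a \<in> carrier G" "b \<in> carrier G" "monoid G"
  shows "\<phi> a \<otimes>\<^bsub>H\<^esub> \<phi> b = \<phi> b \<otimes>\<^bsub>H\<^esub> \<phi> a \<longleftrightarrow> a \<otimes>\<^bsub>G\<^esub> b = b \<otimes>\<^bsub>G\<^esub> a"
proof -
  have "inj_on \<phi> (carrier G)" using assms(1) by (simp add: iso_def bij_betw_def)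
  moreover have "\<phi> (a \<otimes>\<^bsub>G\<^esub> b) = \<phi> a \<otimes>\<^bsub>H\<^esub> \<phi> b" "\<phi> (b \<otimes>\<^bsub>G\<^esub> a) = \<phi> b \<otimes>\<^bsub>H\<^esub> \<phi> a"
    using assms by (simp_all add: iso_def hom_mult)
  ultimately show ?thesis
    using assms(2-4) by (metis inj_onD monoid.m_closed)
qed

lemma abelian_centralizer_iso:
  assumes "\<phi> \<in> iso G H" "monoid G" "g \<in> carrier G" "abelian_centralizer G g"
  shows "abelian_centralizer H (\<phi> g)"
proof -
  have img: "carrier H = \<phi> ` carrier G"
    using assms(1) by (simp add: iso_def bij_betw_def)
  have "\<phi> u \<otimes>\<^bsub>H\<^esub> \<phi> v = \<phi> v \<otimes>\<^bsub>H\<^esub> \<phi> u"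
    if "u \<in> carrier G" "v \<in> carrier G" "\<phi> u \<otimes>\<^bsub>H\<^esub> \<phi> g = \<phi> g \<otimes>\<^bsub>H\<^esub> \<phi> u"
      "\<phi> v \<otimes>\<^bsub>H\<^esub> \<phi> g = \<phi> g \<otimes>\<^bsub>H\<^esub> \<phi> v" for u v
    using that assms iso_commute_iff[OF assms(1) _ _ assms(2)] unfolding abelian_centralizer_def by metis
  then show ?thesis
    unfolding abelian_centralizer_def img by blast
qed

lemma abelian_power_centralizer_iso:
  assumes G: "group G" and H: "group H" and "G \<cong> H" "abelian_power_centralizer r G"
  shows "abelian_power_centralizer r H"
proof -
  obtain \<phi> where \<phi>: "\<phi> \<in> iso G H" using assms(3) unfolding is_iso_def by blast
  obtain h where h: "h \<in> carrier G" "abelian_centralizer G (h [^]\<^bsub>G\<^esub> r)"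
    using assms(4) unfolding abelian_power_centralizer_def by blast
  have "abelian_centralizer H (\<phi> h [^]\<^bsub>H\<^esub> r)"
    using abelian_centralizer_iso[OF \<phi> group.is_monoid[OF G] _ h(2)] h(1) \<phi>
      hom_nat_pow[OF _ h(1) G H] monoid.nat_pow_closed[OF group.is_monoid[OF G]]
    by (simp add: iso_def)
  moreover have "\<phi> h \<in> carrier H"
    using \<phi> h(1) by (auto simp: iso_def hom_def)
  ultimately show ?thesis
    unfolding abelian_power_centralizer_def by blast
qed

section \<open>Arithmetic and finite permutations\<close>

lemma mono_bounded_eventually_const:
  fixes f :: "nat \<Rightarrow> nat"
  assumes "mono f" "\<And>n. f n \<le> B"
  obtains N where "\<And>n. n \<ge> N \<Longrightarrow> f n = f N"
proof -
  have fin: "finite (range f)"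
    using assms(2) by (meson finite_atMost finite_subset image_subsetI atMost_iff)
  then obtain N where "f N = Max (range f)"
    using Max_in by (metis empty_not_UNIV image_iff image_is_empty)
  have "f n = f N" if "n \<ge> N" for n
  proof (rule antisym[rotated])
    show "f N \<le> f n" using monoD[OF assms(1) that] .
    show "f n \<le> f N" unfolding \<open>f N = Max (range f)\<close> by (rule Max_ge[OF fin]) simp
  qed
  then show ?thesis using that by blast
qed

lemma cong_linear_solve_lift:
  fixes a b k P Q :: nat
  assumes "Q dvd P" "[a = b] (mod Q)" "gcd k P dvd Q" "b < P"
  obtains j where "[b + k * j = a] (mod P)" "[k * j = 0] (mod Q)"
proof -
  have "[a + P = b] (mod Q)"
    using assms(1,2) by (auto simp: cong_def elim!: dvdE)
  then have "gcd k P dvd a + P - b"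
    using assms(3,4) by (metis cong_altdef_nat dvd_trans less_imp_le trans_le_add2)
  then obtain j where "[k * j = a + P - b] (mod P)"
    using cong_solve_dvd_nat by blast
  then have "[b + k * j = b + (a + P - b)] (mod P)"
    by (rule cong_add[OF cong_refl])
  also have "b + (a + P - b) = a + P"
    using assms(4) by simp
  finally have j: "[b + k * j = a] (mod P)"
    by (simp add: cong_def)
  moreover have "[b + k * j = b + 0] (mod Q)"
    using cong_dvd_modulus_nat[OF j assms(1)] assms(2) by (simp add: cong_def)
  ultimately show ?thesis
    using that cong_add_lcancel_nat by blast
qed

lemma prime_power_multiplicity_not_dvd:
  fixes r N k :: nat
  assumes "prime r" "\<not> r dvd N" "k \<noteq> 0"
  shows "\<not> r ^ Suc (multiplicity r k) dvd N * k"
proof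
  assume dvd: "r ^ Suc (multiplicity r k) dvd N * k"
  have "N \<noteq> 0" using assms(2) by (metis dvd_0_right)
  then have "Suc (multiplicity r k) \<le> multiplicity r (N * k)"
    using dvd assms by (intro multiplicity_geI) auto
  also have "\<dots> = multiplicity r k"
    using assms \<open>N \<noteq> 0\<close> by (simp add: prime_elem_multiplicity_mult_distrib not_dvd_imp_multiplicity_0)
  finally show False by simp
qed

lemma bij_betw_invariant_subset_iff:
  assumes "bij_betw \<tau> S S" "finite S" "B \<subseteq> S" "\<tau> ` B \<subseteq> B" "i \<in> S"
  shows "\<tau> i \<in> B \<longleftrightarrow> i \<in> B"
proof -
  have inj: "inj_on \<tau> S" using assms(1) by (simp add: bij_betw_def)
  then have "\<tau> ` B = B"
    using assms(2-4) by (meson endo_inj_surj finite_subset inj_on_subset)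
  then show ?thesis
    using assms(3,4,5) inj by (metis image_eqI inj_on_image_mem_iff)
qed

lemma funpow_return_not_dvd:
  assumes "bij_betw \<sigma> S S" "i \<in> S" "prime r" "\<sigma> i = (\<sigma> ^^ (r * j)) i"
  obtains N where "\<not> r dvd N" "(\<sigma> ^^ N) i = i"
proof (cases "j = 0")
  case True
  then show ?thesis using that[of 1] assms(3,4) by (simp add: prime_nat_iff)
next
  case False
  have r2: "r \<ge> 2" using assms(3) by (simp add: prime_ge_2_nat)
  define N where "N = r * j - 1"
  have sN: "r * j = Suc N" unfolding N_def using False r2 by (cases j) auto
  have "\<sigma> ((\<sigma> ^^ N) i) = \<sigma> i" using assms(4) sN by simp
  moreover have "(\<sigma> ^^ N) i \<in> S"
    using bij_betw_funpow[OF assms(1)] assms(2) by (blast dest: bij_betwE)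
  ultimately have "(\<sigma> ^^ N) i = i"
    using assms(1,2) by (metis bij_betw_def inj_onD)
  moreover have "\<not> r dvd N"
  proof
    assume "r dvd N"
    moreover have "r dvd Suc N" by (simp flip: sN)
    ultimately have "r dvd 1" using dvd_diff_nat[of r "Suc N" N] by simp
    then show False using r2 by simp
  qed
  ultimately show ?thesis using that by blast
qed

lemma rotation_commuting_period_dvd:
  fixes \<sigma> :: "nat \<Rightarrow> nat"
  assumes P: "0 < P" and \<sigma>: "\<And>i. i < P \<Longrightarrow> \<sigma> i < P"
    and rot: "\<And>i. i < P \<Longrightarrow> \<sigma> ((i + k) mod P) = (\<sigma> i + k) mod P"
    and a: "k mod P = (\<sigma> ^^ a) 0" and N: "(\<sigma> ^^ N) 0 = 0"
  shows "P dvd N * k"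
proof -
  have \<sigma>t: "(\<sigma> ^^ t) i < P" if "i < P" for i t
    using that \<sigma> by (induction t) auto
  have rot_t: "(\<sigma> ^^ t) ((i + k) mod P) = ((\<sigma> ^^ t) i + k) mod P" if "i < P" for i t
    using that by (induction t) (simp_all add: rot \<sigma>t)
  have tk: "(t * k) mod P = (\<sigma> ^^ (a * t)) 0" for t
  proof (induction t)
    case (Suc t)
    have "(Suc t * k) mod P = ((t * k) mod P + k) mod P"
      by (metis mod_add_left_eq mult_Suc add.commute)
    also have "\<dots> = (\<sigma> ^^ (a * t)) ((0 + k) mod P)"
      using Suc rot_t[of 0 "a * t"] P by simp
    also have "\<dots> = (\<sigma> ^^ (a * t)) ((\<sigma> ^^ a) 0)"
      using a by simp
    also have "\<dots> = (\<sigma> ^^ (a * Suc t)) 0"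
      by (simp only: mult_Suc_right add.commute[of a] funpow_add o_apply)
    finally show ?case .
  qed simp
  have "(\<sigma> ^^ (N * s)) 0 = 0" for s
    by (induction s) (simp_all add: funpow_add N)
  then have "(N * k) mod P = 0"
    using tk[of N] by (simp add: mult.commute[of a])
  then show ?thesis by (simp add: mod_eq_0_iff_dvd)
qed

section \<open>Odometers\<close>

definition odo_of_nat :: "(nat \<Rightarrow> nat) \<Rightarrow> nat \<Rightarrow> nat \<Rightarrow> nat" where
  "odo_of_nat p i = (\<lambda>n. i mod p n)"

definition odo_neg :: "(nat \<Rightarrow> nat) \<Rightarrow> (nat \<Rightarrow> nat) \<Rightarrow> nat \<Rightarrow> nat" where
  "odo_neg p a = (\<lambda>n. (p n - a n) mod p n)"

definition cylinder_shift :: "(nat \<Rightarrow> nat) \<Rightarrow> nat \<Rightarrow> nat set \<Rightarrow> nat \<Rightarrow> (nat \<Rightarrow> nat) \<Rightarrow> nat \<Rightarrow> nat" where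
  "cylinder_shift p m B c x = (if x m \<in> B then (odo_plus1 p ^^ c) x else x)"

lemma odo_add_of_nat: "odo_add p x (odo_of_nat p j) = (\<lambda>n. (x n + j) mod p n)"
  by (simp add: odo_add_def odo_of_nat_def mod_add_right_eq)

lemma odo_add_right_commute: "odo_add p (odo_add p x a) b = odo_add p (odo_add p x b) a"
  by (simp add: odo_add_def mod_add_left_eq add.assoc add.commute[of "a _"])

locale odometer_scale =
  fixes p :: "nat \<Rightarrow> nat"
  assumes is_scale: "is_scale p"
begin

abbreviation Aut :: "((nat \<Rightarrow> nat) \<Rightarrow> nat \<Rightarrow> nat) monoid" where
  "Aut \<equiv> Aut_inf_group (odometer p) (odo_plus1 p)"

lemma scale_pos: "0 < p n"
  using is_scale unfolding is_scale_def by blast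

lemma scale_dvd_mono: "n \<le> m \<Longrightarrow> p n dvd p m"
proof (induction m rule: dec_induct)
  case (step m)
  then show ?case
    using is_scale dvd_trans unfolding is_scale_def by blast
qed simp

lemma scale_unbounded: "\<exists>n. c < p n"
proof (rule ccontr)
  assume "\<nexists>n. c < p n"
  then have "p n \<le> c" for n by (simp add: not_less)
  moreover have "mono p"
    using scale_dvd_mono scale_pos by (intro monoI) (simp add: dvd_imp_le)
  ultimately obtain N where "\<And>n. n \<ge> N \<Longrightarrow> p n = p N"
    using mono_bounded_eventually_const by metis
  then show False using is_scale unfolding is_scale_def by blast
qed

lemma odometer_less: "x \<in> odometer p \<Longrightarrow> x n < p n"
  unfolding odometer_def by blast

lemma odometer_mod:
  assumes "x \<in> odometer p" "n \<le> m"
  shows "x m mod p n = x n"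
  using assms(2)
proof (induction m rule: dec_induct)
  case base
  then show ?case using odometer_less[OF assms(1)] by simp
next
  case (step m)
  have "x (Suc m) mod p n = x (Suc m) mod p m mod p n"
    using scale_dvd_mono[OF step(1)] by (simp add: mod_mod_cancel)
  also have "\<dots> = x n"
    using step assms(1) unfolding odometer_def by simp
  finally show ?case .
qed

lemma odometer_mod_eq:
  assumes x: "x \<in> odometer p" and "d dvd p a" "d dvd p b"
  shows "x a mod d = x b mod d"
proof -
  have *: "x j mod d = x i mod d" if "i \<le> j" "d dvd p i" for i j
    using odometer_mod[OF x that(1)] mod_mod_cancel[OF that(2)] by metis
  show ?thesis
    using *[of a b] *[of b a] assms(2,3) by (cases "a \<le> b") auto
qed

lemma odometer_coord_eq:
  "x \<in> odometer p \<Longrightarrow> y \<in> odometer p \<Longrightarrow> x N = y N \<Longrightarrow> n \<le> N \<Longrightarrow> x n = y n"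
  using odometer_mod[of x n N] odometer_mod[of y n N] by simp

lemma odo_of_nat_in: "odo_of_nat p i \<in> odometer p"
  unfolding odometer_def odo_of_nat_def
  using scale_pos scale_dvd_mono by (auto simp: mod_mod_cancel)

lemma odometer_zero: "(\<lambda>n. 0) \<in> odometer p"
  using odo_of_nat_in[of 0] by (simp add: odo_of_nat_def)

lemma odo_of_nat_coord: "x \<in> odometer p \<Longrightarrow> odo_of_nat p (x m) m = x m"
  unfolding odo_of_nat_def using odometer_less by simp

lemma odo_add_in:
  assumes "x \<in> odometer p" "a \<in> odometer p"
  shows "odo_add p x a \<in> odometer p"
proof -
  have "(x (Suc n) + a (Suc n)) mod p (Suc n) mod p n = (x n + a n) mod p n" for n
  proof -
    have "(x (Suc n) + a (Suc n)) mod p (Suc n) mod p n = (x (Suc n) + a (Suc n)) mod p n"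
      using scale_dvd_mono[of n "Suc n"] by (simp add: mod_mod_cancel)
    also have "\<dots> = (x (Suc n) mod p n + a (Suc n) mod p n) mod p n"
      by (simp add: mod_add_eq)
    also have "\<dots> = (x n + a n) mod p n"
      using assms unfolding odometer_def by simp
    finally show ?thesis .
  qed
  then show ?thesis
    unfolding odometer_def odo_add_def using scale_pos by auto
qed

lemma odo_neg_in:
  assumes a: "a \<in> odometer p"
  shows "odo_neg p a \<in> odometer p"
proof -
  have "(p (Suc n) - a (Suc n)) mod p (Suc n) mod p n = (p n - a n) mod p n" for n
  proof -
    have d: "p n dvd p (Suc n)" by (rule scale_dvd_mono) simp
    have "[p (Suc n) - a (Suc n) = p n - a (Suc n) mod p n] (mod p n)"
      using d odometer_less[OF a, of "Suc n"] scale_pos[of n]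
      by (intro cong_diff_nat) (auto simp: cong_def less_imp_le)
    then show ?thesis
      using a d unfolding cong_def odometer_def by (simp add: mod_mod_cancel)
  qed
  then show ?thesis
    unfolding odometer_def odo_neg_def using scale_pos by auto
qed

lemma odo_add_add_neg:
  assumes "x \<in> odometer p" "a \<in> odometer p"
  shows "odo_add p (odo_add p x a) (odo_neg p a) = x"
proof
  fix n
  have "odo_add p (odo_add p x a) (odo_neg p a) n = (x n + a n + (p n - a n)) mod p n"
    unfolding odo_add_def odo_neg_def by (simp add: mod_add_eq)
  also have "\<dots> = (x n + p n) mod p n"
    using odometer_less[OF assms(2)] by (simp add: less_imp_le)
  also have "\<dots> = x n"
    using odometer_less[OF assms(1)] by simp
  finally show "odo_add p (odo_add p x a) (odo_neg p a) n = x n" .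
qed

lemma odo_add_neg_add:
  "x \<in> odometer p \<Longrightarrow> a \<in> odometer p \<Longrightarrow> odo_add p (odo_add p x (odo_neg p a)) a = x"
  by (subst odo_add_right_commute) (rule odo_add_add_neg)

lemma odo_plus1_funpow: "x \<in> odometer p \<Longrightarrow> (odo_plus1 p ^^ j) x = (\<lambda>n. (x n + j) mod p n)"
proof (induction j)
  case 0
  then show ?case using odometer_less by auto
next
  case (Suc j)
  have "(odo_plus1 p ^^ Suc j) x = odo_plus1 p (\<lambda>n. (x n + j) mod p n)"
    using Suc by simp
  also have "\<dots> = (\<lambda>n. (x n + Suc j) mod p n)"
    unfolding odo_plus1_def odo_add_def odo_one_def
    using mod_add_eq[of "x _ + j" "p _" 1] by simp
  finally show ?case .
qed

lemma odo_plus1_funpow_eq_add: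
  "x \<in> odometer p \<Longrightarrow> (odo_plus1 p ^^ j) x = odo_add p x (odo_of_nat p j)"
  by (simp add: odo_plus1_funpow odo_add_of_nat)

lemma odo_plus1_funpow_in: "x \<in> odometer p \<Longrightarrow> (odo_plus1 p ^^ j) x \<in> odometer p"
  by (simp add: odo_plus1_funpow_eq_add odo_add_in odo_of_nat_in)

lemma odo_plus1_image: "odo_plus1 p ` odometer p \<subseteq> odometer p"
  using odo_plus1_funpow_in[of _ 1] by auto

lemma odo_plus1_funpow_neq:
  assumes "x \<in> odometer p" "c \<ge> 1"
  shows "(odo_plus1 p ^^ c) x \<noteq> x"
proof
  assume "(odo_plus1 p ^^ c) x = x"
  then have eq: "(x n + c) mod p n = x n" for n
    using assms(1) by (metis odo_plus1_funpow)
  obtain n where n: "c < p n" using scale_unbounded by blast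
  show False
  proof (cases "x n + c < p n")
    case False
    then have "(x n + c) mod p n = x n + c - p n"
      using n odometer_less[OF assms(1), of n] by (simp add: mod_if)
    then show False using eq[of n] n False by linarith
  qed (use eq[of n] assms(2) in simp)
qed

lemma odo_add_coord_zero: "x \<in> odometer p \<Longrightarrow> a m = 0 \<Longrightarrow> odo_add p x a m = x m"
  unfolding odo_add_def using odometer_less by simp

lemma odo_add_funpow:
  "x \<in> odometer p \<Longrightarrow> ((\<lambda>y. odo_add p y a) ^^ j) x = (\<lambda>n. (x n + j * a n) mod p n)"
proof (induction j)
  case 0
  then show ?case using odometer_less by auto
next
  case (Suc j)
  then show ?case by (simp add: odo_add_def mod_add_left_eq mod_add_right_eq ac_simps)
qed

lemma coord_determined_odo_add: "coord_determined (odometer p) (\<lambda>x. odo_add p x a)"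
  unfolding coord_determined_def odo_add_def
proof
  fix n
  show "\<exists>N. \<forall>x\<in>odometer p. \<forall>y\<in>odometer p. x N = y N \<longrightarrow>
    (\<lambda>n. (x n + a n) mod p n) n = (\<lambda>n. (y n + a n) mod p n) n"
    by (rule exI[of _ n]) simp
qed

lemma translation_in_Aut_inf:
  assumes a: "a \<in> odometer p"
  shows "restrict (\<lambda>x. odo_add p x a) (odometer p) \<in> carrier Aut"
proof (rule Aut_inf_group_memI[OF odo_plus1_image _ _ _ _ coord_determined_odo_add coord_determined_odo_add])
  show "(\<lambda>x. odo_add p x a) ` odometer p \<subseteq> odometer p"
    "(\<lambda>x. odo_add p x (odo_neg p a)) ` odometer p \<subseteq> odometer p"
    using a odo_add_in odo_neg_in by auto
  show "odo_add p (odo_add p x a) (odo_neg p a) = x" "odo_add p (odo_add p x (odo_neg p a)) a = x"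
    if "x \<in> odometer p" for x
    using that a by (simp_all add: odo_add_add_neg odo_add_neg_add)
  show "odo_add p ((odo_plus1 p ^^ 1) x) a = (odo_plus1 p ^^ 1) (odo_add p x a)"
    if "x \<in> odometer p" for x
    using that odo_add_in[OF that a] by (simp only: odo_plus1_funpow_eq_add odo_add_right_commute)
qed simp

lemma coord_determined_cylinder_translation:
  "coord_determined (odometer p) (\<lambda>x. if x m \<in> B then odo_add p x a else x)"
  unfolding coord_determined_def
proof
  fix n
  show "\<exists>N. \<forall>x\<in>odometer p. \<forall>y\<in>odometer p. x N = y N \<longrightarrow>
    (if x m \<in> B then odo_add p x a else x) n = (if y m \<in> B then odo_add p y a else y) n"
  proof (intro exI[of _ "max n m"] ballI impI)
    fix x y assume "x \<in> odometer p" "y \<in> odometer p" "x (max n m) = y (max n m)"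
    then have "x n = y n" "x m = y m" using odometer_coord_eq by simp_all
    then show "(if x m \<in> B then odo_add p x a else x) n = (if y m \<in> B then odo_add p y a else y) n"
      by (simp add: odo_add_def)
  qed
qed

lemma cylinder_translation_in_Aut_inf:
  assumes a: "a \<in> odometer p" and am: "a m = 0"
  shows "restrict (\<lambda>x. if x m \<in> B then odo_add p x a else x) (odometer p) \<in> carrier Aut"
proof -
  have na: "odo_neg p a \<in> odometer p" "odo_neg p a m = 0"
    using odo_neg_in[OF a] am by (simp_all add: odo_neg_def)
  have Tm: "(odo_plus1 p ^^ p m) x m = x m" if "x \<in> odometer p" for x
    using that by (simp add: odo_plus1_funpow odometer_less)
  show ?thesis
  proof (rule Aut_inf_group_memI[OF odo_plus1_image _ _ _ _
        coord_determined_cylinder_translation coord_determined_cylinder_translation])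
    have "(\<lambda>x. if x m \<in> B then odo_add p x b else x) ` odometer p \<subseteq> odometer p"
      if "b \<in> odometer p" for b
      using odo_add_in[OF _ that] by auto
    then show "(\<lambda>x. if x m \<in> B then odo_add p x a else x) ` odometer p \<subseteq> odometer p"
      "(\<lambda>x. if x m \<in> B then odo_add p x (odo_neg p a) else x) ` odometer p \<subseteq> odometer p"
      using a na(1) by blast+
    show "(\<lambda>x. if x m \<in> B then odo_add p x (odo_neg p a) else x)
            (if x m \<in> B then odo_add p x a else x) = x"
      "(\<lambda>x. if x m \<in> B then odo_add p x a else x)
            (if x m \<in> B then odo_add p x (odo_neg p a) else x) = x"
      if "x \<in> odometer p" for x
      using that a am na
      by (simp_all add: odo_add_coord_zero odo_add_add_neg odo_add_neg_add)
    show "p m \<ge> 1" using scale_pos[of m] by simp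
    show "(if (odo_plus1 p ^^ p m) x m \<in> B then odo_add p ((odo_plus1 p ^^ p m) x) a
             else (odo_plus1 p ^^ p m) x) =
          (odo_plus1 p ^^ p m) (if x m \<in> B then odo_add p x a else x)"
      if "x \<in> odometer p" for x
      using that Tm[OF that] odo_add_in[OF that a]
      by (simp add: odo_plus1_funpow_eq_add odo_add_right_commute)
  qed
qed

lemma plus1_funpow_in_Aut_inf:
  "restrict (odo_plus1 p ^^ k) (odometer p) \<in> carrier Aut"
proof -
  have "restrict (odo_plus1 p ^^ k) (odometer p) = restrict (\<lambda>x. odo_add p x (odo_of_nat p k)) (odometer p)"
    by (auto intro: restrict_ext simp: odo_plus1_funpow_eq_add)
  then show ?thesis using translation_in_Aut_inf[OF odo_of_nat_in] by simp
qed

lemma cylinder_shift_in_Aut_inf: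
  assumes "p m dvd c"
  shows "restrict (cylinder_shift p m B c) (odometer p) \<in> carrier Aut"
proof -
  have "restrict (cylinder_shift p m B c) (odometer p) =
    restrict (\<lambda>x. if x m \<in> B then odo_add p x (odo_of_nat p c) else x) (odometer p)"
    by (auto intro: restrict_ext simp: cylinder_shift_def odo_plus1_funpow_eq_add)
  moreover have "odo_of_nat p c m = 0"
    using assms by (simp add: odo_of_nat_def)
  ultimately show ?thesis
    using cylinder_translation_in_Aut_inf[OF odo_of_nat_in] by simp
qed

lemma cylinder_shift_in: "x \<in> odometer p \<Longrightarrow> cylinder_shift p m B c x \<in> odometer p"
  by (simp add: cylinder_shift_def odo_plus1_funpow_in)

lemma continuous_on_odometer_eventually_determined:
  fixes f :: "(nat \<Rightarrow> nat) \<Rightarrow> nat \<Rightarrow> nat"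
  assumes "continuous_on (odometer p) f" "x \<in> odometer p"
  obtains M0 where "\<And>M z. M \<ge> M0 \<Longrightarrow> z \<in> odometer p \<Longrightarrow> z M = x M \<Longrightarrow> f z m = f x m"
proof -
  obtain F where F: "finite F" "\<And>z. z \<in> odometer p \<Longrightarrow> (\<forall>i\<in>F. z i = x i) \<Longrightarrow> f z m = f x m"
    using continuous_on_fun_coordinate_locally_finite[OF assms] by blast
  have "f z m = f x m" if M: "Max (insert 0 F) \<le> M" and z: "z \<in> odometer p" "z M = x M" for M z
  proof (rule F(2)[OF z(1)], intro ballI)
    fix i assume "i \<in> F"
    then have "i \<le> M" using M F(1) by (meson Max_ge finite_insert insertI2 le_trans)
    then show "z i = x i" using odometer_coord_eq[OF z(1) assms(2) z(2)] by blast
  qed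
  then show ?thesis using that by blast
qed

lemma commute_funpow_coord_eq:
  fixes f :: "(nat \<Rightarrow> nat) \<Rightarrow> nat \<Rightarrow> nat"
  assumes cont: "continuous_on (odometer p) f" and fX: "f ` odometer p \<subseteq> odometer p"
    and fT: "\<And>x. x \<in> odometer p \<Longrightarrow> f ((odo_plus1 p ^^ k) x) = (odo_plus1 p ^^ k) (f x)"
    and stable: "\<And>M. M \<ge> m \<Longrightarrow> gcd k (p M) = gcd k (p m)"
    and x: "x \<in> odometer p" and z: "z \<in> odometer p" and xz: "x m = z m"
  shows "f x m = f z m"
proof -
  \<comment> \<open>Moving \<open>z\<close> along the orbit of \<open>(+1)^k\<close> makes it agree with \<open>x\<close> at a level \<open>M\<close> where
    \<open>f\<close> is locally constant, while the \<open>m\<close>-th coordinates of \<open>z\<close> and \<open>f z\<close> do not move.\<close>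
  obtain M0 where M0: "\<And>M w. M \<ge> M0 \<Longrightarrow> w \<in> odometer p \<Longrightarrow> w M = x M \<Longrightarrow> f w m = f x m"
    using continuous_on_odometer_eventually_determined[OF cont x] by blast
  define M where "M = max M0 m"
  have M: "m \<le> M" "M0 \<le> M" unfolding M_def by auto
  have "[x M = z M] (mod p m)"
    using odometer_mod[OF x M(1)] odometer_mod[OF z M(1)] xz by (simp add: cong_def)
  then obtain j where j: "[z M + k * j = x M] (mod p M)" "[k * j = 0] (mod p m)"
    using cong_linear_solve_lift[OF scale_dvd_mono[OF M(1)]] stable[OF M(1)] odometer_less[OF z]
    by (metis gcd_dvd2)
  define w where "w = (odo_plus1 p ^^ (k * j)) z"
  have "w \<in> odometer p" "w M = x M"
    using j(1) odometer_less[OF x, of M] odo_plus1_funpow_in[OF z]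
    by (simp_all add: w_def odo_plus1_funpow[OF z] cong_def)
  then have "f x m = f w m" using M0[OF M(2)] by simp
  also have "f w = (odo_plus1 p ^^ (k * j)) (f z)"
    unfolding w_def funpow_mult[symmetric]
    by (rule commute_on_funpow[where f = f and F = "odo_plus1 p ^^ k", OF fT _ z])
       (auto intro: odo_plus1_funpow_in)
  also have "\<dots> m = f z m"
    using j(2) fX z odometer_less[of "f z" m]
    by (auto simp: odo_plus1_funpow cong_0_iff elim!: dvdE)
  finally show ?thesis .
qed

lemma commute_plus1_eq_translation:
  fixes u :: "(nat \<Rightarrow> nat) \<Rightarrow> nat \<Rightarrow> nat"
  assumes cont: "continuous_on (odometer p) u" and uX: "u ` odometer p \<subseteq> odometer p"
    and uT: "\<And>x. x \<in> odometer p \<Longrightarrow> u (odo_plus1 p x) = odo_plus1 p (u x)"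
    and x: "x \<in> odometer p"
  shows "u x = odo_add p x (u (\<lambda>n. 0))"
proof
  fix m
  have "u x m = u (odo_of_nat p (x m)) m"
    by (rule commute_funpow_coord_eq[OF cont uX _ _ x odo_of_nat_in, where k = 1])
       (simp_all add: uT odo_of_nat_coord[OF x])
  also have "odo_of_nat p (x m) = (odo_plus1 p ^^ x m) (\<lambda>n. 0)"
    by (simp add: odo_plus1_funpow[OF odometer_zero] odo_of_nat_def)
  also have "u \<dots> = (odo_plus1 p ^^ x m) (u (\<lambda>n. 0))"
    by (rule commute_on_funpow[where f = u and F = "odo_plus1 p", OF uT odo_plus1_image odometer_zero])
  finally show "u x m = odo_add p x (u (\<lambda>n. 0)) m"
    using uX odometer_zero by (auto simp: odo_plus1_funpow odo_add_def add.commute)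
qed

section \<open>Primes not dividing the scale\<close>

lemma exists_odo_inverse:
  assumes "\<And>n. coprime r (p n)"
  obtains e where "e \<in> odometer p" "\<And>n. [r * e n = 1] (mod p n)"
proof -
  have inv: "\<exists>a. a < p n \<and> [r * a = 1] (mod p n)" for n
  proof -
    obtain a where "[r * a = 1] (mod p n)"
      using cong_solve_coprime_nat[OF assms] by auto
    then have "[r * (a mod p n) = 1] (mod p n)"
      by (simp add: cong_def mod_mult_right_eq)
    then show ?thesis using scale_pos by (meson mod_less_divisor)
  qed
  have uniq: "a = b" if "a < p n" "b < p n" "[r * a = 1] (mod p n)" "[r * b = 1] (mod p n)" for a b n
    using that cong_mult_lcancel_nat[OF assms] cong_less_imp_eq_nat cong_sym cong_trans
    by (metis le0)
  define e where "e n = (SOME a. a < p n \<and> [r * a = 1] (mod p n))" for n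
  have e: "e n < p n" "[r * e n = 1] (mod p n)" for n
    unfolding e_def using someI_ex[OF inv] by blast+
  have "e (Suc n) mod p n = e n" for n
  proof (rule uniq)
    have "p n dvd p (Suc n)" by (rule scale_dvd_mono) simp
    then show "[r * (e (Suc n) mod p n) = 1] (mod p n)"
      using cong_dvd_modulus_nat[OF e(2)] by (simp add: cong_def mod_mult_right_eq)
  qed (use e scale_pos in auto)
  then have "e \<in> odometer p"
    unfolding odometer_def using e(1) by blast
  then show ?thesis using that e(2) by blast
qed

lemma translation_pow_eq_plus1:
  assumes e: "e \<in> odometer p" "\<And>n. [r * e n = 1] (mod p n)"
  shows "restrict (\<lambda>x. odo_add p x e) (odometer p) [^]\<^bsub>Aut\<^esub> r = restrict (odo_plus1 p) (odometer p)"
proof -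
  have "((\<lambda>y. odo_add p y e) ^^ r) x = odo_plus1 p x" if x: "x \<in> odometer p" for x
  proof
    fix n
    have "((\<lambda>y. odo_add p y e) ^^ r) x n = (x n + r * e n mod p n) mod p n"
      using odo_add_funpow[OF x] by (simp add: mod_add_right_eq)
    also have "\<dots> = (x n + 1) mod p n"
      using e(2)[of n] by (simp add: cong_def mod_add_right_eq)
    also have "\<dots> = odo_plus1 p x n"
      using odo_plus1_funpow[OF x, of 1] by simp
    finally show "((\<lambda>y. odo_add p y e) ^^ r) x n = odo_plus1 p x n" .
  qed
  moreover have "(restrict (\<lambda>y. odo_add p y e) (odometer p) ^^ r) x = ((\<lambda>y. odo_add p y e) ^^ r) x"
    if "x \<in> odometer p" for x
    using that odo_add_in[OF _ e(1)] by (intro restrict_funpow) auto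
  ultimately show ?thesis
    unfolding Aut_inf_group_nat_pow[OF translation_in_Aut_inf[OF e(1)] odo_plus1_image]
    by (auto intro: restrict_ext)
qed

lemma abelian_centralizer_plus1: "abelian_centralizer Aut (restrict (odo_plus1 p) (odometer p))"
proof -
  have T: "restrict (odo_plus1 p) (odometer p) \<in> carrier Aut"
    using plus1_funpow_in_Aut_inf[of 1] by simp
  have translation: "u x = odo_add p x (u (\<lambda>n. 0))"
    if u: "u \<in> carrier Aut"
      "u \<otimes>\<^bsub>Aut\<^esub> restrict (odo_plus1 p) (odometer p) = restrict (odo_plus1 p) (odometer p) \<otimes>\<^bsub>Aut\<^esub> u"
      and x: "x \<in> odometer p" for u x
  proof (rule commute_plus1_eq_translation[OF _ _ _ x])
    show "continuous_on (odometer p) u"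
      using u(1) by (rule Aut_inf_group_carrierE)
    show "u ` odometer p \<subseteq> odometer p"
      using Aut_inf_group_carrier_in[OF u(1)] by blast
    show "u (odo_plus1 p y) = odo_plus1 p (u y)" if "y \<in> odometer p" for y
      using u Aut_inf_group_commute_iff[OF u(1) T] that odo_plus1_image Aut_inf_group_carrier_in[OF u(1)]
      by auto
  qed
  show ?thesis
    unfolding abelian_centralizer_def
  proof (intro ballI impI)
    fix u v assume uv: "u \<in> carrier Aut" "v \<in> carrier Aut"
      "u \<otimes>\<^bsub>Aut\<^esub> restrict (odo_plus1 p) (odometer p) = restrict (odo_plus1 p) (odometer p) \<otimes>\<^bsub>Aut\<^esub> u"
      "v \<otimes>\<^bsub>Aut\<^esub> restrict (odo_plus1 p) (odometer p) = restrict (odo_plus1 p) (odometer p) \<otimes>\<^bsub>Aut\<^esub> v"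
    have "u (v x) = v (u x)" if "x \<in> odometer p" for x
      using translation[OF uv(1,3)] translation[OF uv(2,4)] that
        Aut_inf_group_carrier_in[OF uv(1)] Aut_inf_group_carrier_in[OF uv(2)]
      by (simp add: odo_add_right_commute)
    then show "u \<otimes>\<^bsub>Aut\<^esub> v = v \<otimes>\<^bsub>Aut\<^esub> u"
      using Aut_inf_group_commute_iff[OF uv(1,2)] by blast
  qed
qed

lemma abelian_power_centralizer_if_coprime:
  assumes "\<And>n. coprime r (p n)"
  shows "abelian_power_centralizer r Aut"
proof -
  obtain e where e: "e \<in> odometer p" "\<And>n. [r * e n = 1] (mod p n)"
    using exists_odo_inverse assms by blast
  show ?thesis
    unfolding abelian_power_centralizer_def
    by (rule bexI[OF _ translation_in_Aut_inf[OF e(1)]])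
       (simp add: translation_pow_eq_plus1[OF e] abelian_centralizer_plus1)
qed

section \<open>Primes dividing the scale\<close>

lemma exists_stable_level:
  assumes "k \<ge> 1" "d dvd p n0"
  obtains m where "\<And>M. M \<ge> m \<Longrightarrow> gcd k (p M) = gcd k (p m)" "d dvd p m"
proof -
  have "gcd k (p n) dvd gcd k (p n')" if "n \<le> n'" for n n'
    using dvd_trans[OF gcd_dvd2 scale_dvd_mono[OF that]] by (rule gcd_greatest[OF gcd_dvd1])
  then have "mono (\<lambda>n. gcd k (p n))"
    using assms(1) by (intro monoI) (simp add: dvd_imp_le)
  moreover have "gcd k (p n) \<le> k" for n
    using assms(1) by (simp add: gcd_le1_nat)
  ultimately obtain m1 where m1: "\<And>n. n \<ge> m1 \<Longrightarrow> gcd k (p n) = gcd k (p m1)"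
    using mono_bounded_eventually_const by blast
  define m where "m = max m1 n0"
  have "gcd k (p M) = gcd k (p m)" if "M \<ge> m" for M
    using m1[of M] m1[of m] that unfolding m_def by simp
  moreover have "d dvd p m"
    using assms(2) scale_dvd_mono[of n0 m] dvd_trans unfolding m_def by simp
  ultimately show ?thesis using that by blast
qed

lemma cylinder_shift_commute_imp_mem:
  fixes g :: "(nat \<Rightarrow> nat) \<Rightarrow> nat \<Rightarrow> nat"
  assumes c: "c \<ge> 1" and gX: "g ` odometer p \<subseteq> odometer p"
    and gT: "\<And>x. x \<in> odometer p \<Longrightarrow> g ((odo_plus1 p ^^ c) x) = (odo_plus1 p ^^ c) (g x)"
    and gw: "\<And>x. x \<in> odometer p \<Longrightarrow> g (cylinder_shift p m B c x) = cylinder_shift p m B c (g x)"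
    and x: "x \<in> odometer p" "x m \<in> B"
  shows "g x m \<in> B"
proof (rule ccontr)
  assume "g x m \<notin> B"
  then have "(odo_plus1 p ^^ c) (g x) = g x"
    using gw[OF x(1)] gT[OF x(1)] x(2) by (simp add: cylinder_shift_def)
  then show False
    using odo_plus1_funpow_neq[OF _ c] gX x(1) by blast
qed

end

locale odometer_aut = odometer_scale +
  fixes h :: "(nat \<Rightarrow> nat) \<Rightarrow> nat \<Rightarrow> nat" and k m :: nat
  assumes aut: "h \<in> carrier Aut"
    and commute: "\<And>x. x \<in> odometer p \<Longrightarrow> h ((odo_plus1 p ^^ k) x) = (odo_plus1 p ^^ k) (h x)"
    and stable: "\<And>M. M \<ge> m \<Longrightarrow> gcd k (p M) = gcd k (p m)"
begin

definition level_perm :: "nat \<Rightarrow> nat" where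
  "level_perm i = h (odo_of_nat p i) m"

lemma aut_bij: "bij_betw h (odometer p) (odometer p)"
  and aut_continuous: "continuous_on (odometer p) h"
  using aut by (auto elim: Aut_inf_group_carrierE)

lemma aut_image: "h ` odometer p \<subseteq> odometer p"
  using aut_bij by (simp add: bij_betw_def)

lemma aut_in: "x \<in> odometer p \<Longrightarrow> h x \<in> odometer p"
  using aut_image by blast

lemma level_perm_coord: "x \<in> odometer p \<Longrightarrow> h x m = level_perm (x m)"
  unfolding level_perm_def
  by (rule commute_funpow_coord_eq[OF aut_continuous aut_image commute stable _ odo_of_nat_in])
     (simp_all add: odo_of_nat_coord)

lemma funpow_level_perm:
  assumes "x \<in> odometer p"
  shows "(h ^^ j) x m = (level_perm ^^ j) (x m)"
proof (induction j)
  case (Suc j)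
  have "(h ^^ j) x \<in> odometer p"
    by (rule funpow_closed[OF aut_image assms])
  then show ?case using Suc by (simp add: level_perm_coord)
qed simp

lemma bij_betw_level_perm: "bij_betw level_perm {..<p m} {..<p m}"
proof -
  have into: "level_perm ` {..<p m} \<subseteq> {..<p m}"
    unfolding level_perm_def using aut_in odo_of_nat_in odometer_less by blast
  have "{..<p m} \<subseteq> level_perm ` {..<p m}"
  proof
    fix i assume "i \<in> {..<p m}"
    obtain y where y: "y \<in> odometer p" "h y = odo_of_nat p i"
      using aut_bij odo_of_nat_in by (metis bij_betw_iff_bijections)
    have "level_perm (y m) = h y m"
      using level_perm_coord[OF y(1)] by simp
    also have "\<dots> = i"
      using y(2) \<open>i \<in> {..<p m}\<close> by (simp add: odo_of_nat_def)
    finally show "i \<in> level_perm ` {..<p m}"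
      using odometer_less[OF y(1)] by force
  qed
  then show ?thesis
    using into finite_surj_inj[of "{..<p m}" level_perm] by (simp add: bij_betw_def)
qed

lemma level_perm_rotate:
  assumes "i < p m"
  shows "level_perm ((i + k) mod p m) = (level_perm i + k) mod p m"
proof -
  have x: "odo_of_nat p i \<in> odometer p" by (rule odo_of_nat_in)
  have "(odo_plus1 p ^^ k) (odo_of_nat p i) m = (i + k) mod p m"
    using odo_plus1_funpow[OF x, of k] by (simp add: odo_of_nat_def mod_add_left_eq)
  then have "level_perm ((i + k) mod p m) = h ((odo_plus1 p ^^ k) (odo_of_nat p i)) m"
    using level_perm_coord[OF odo_plus1_funpow_in[OF x]] by simp
  also have "\<dots> = (level_perm i + k) mod p m"
    using commute[OF x] aut_in[OF x] by (simp add: odo_plus1_funpow level_perm_def)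
  finally show ?thesis .
qed

lemma funpow_commute_plus1_funpow:
  assumes x: "x \<in> odometer p"
  shows "(h ^^ j) ((odo_plus1 p ^^ (k * t)) x) = (odo_plus1 p ^^ (k * t)) ((h ^^ j) x)"
proof -
  have "(odo_plus1 p ^^ (k * t)) (h y) = h ((odo_plus1 p ^^ (k * t)) y)" if "y \<in> odometer p" for y
    unfolding funpow_mult[symmetric]
    by (rule commute_on_funpow[where f = h and F = "odo_plus1 p ^^ k", OF commute _ that, symmetric])
       (auto intro: odo_plus1_funpow_in)
  from commute_on_funpow[where f = "odo_plus1 p ^^ (k * t)" and F = h, OF this aut_image x]
  show ?thesis by simp
qed

lemma funpow_commute_cylinder_shift:
  assumes B: "B \<subseteq> {..<p m}" "(level_perm ^^ j) ` B \<subseteq> B" and x: "x \<in> odometer p"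
  shows "(h ^^ j) (cylinder_shift p m B (k * t) x) = cylinder_shift p m B (k * t) ((h ^^ j) x)"
proof -
  have "(h ^^ j) x m \<in> B \<longleftrightarrow> x m \<in> B"
    using bij_betw_invariant_subset_iff[OF bij_betw_funpow[OF bij_betw_level_perm] _ B]
      odometer_less[OF x] funpow_level_perm[OF x] by simp
  then show ?thesis
    using funpow_commute_plus1_funpow[OF x] by (simp add: cylinder_shift_def)
qed

definition level_orbit :: "nat \<Rightarrow> nat set" where
  "level_orbit r = range (\<lambda>j. (level_perm ^^ (r * j)) 0)"

lemma level_orbit_subset: "level_orbit r \<subseteq> {..<p m}"
  using bij_betwE[OF bij_betw_funpow[OF bij_betw_level_perm]] scale_pos[of m]
  unfolding level_orbit_def by blast

lemma level_orbit_invariant: "(level_perm ^^ r) ` level_orbit r \<subseteq> level_orbit r"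
proof
  fix y assume "y \<in> (level_perm ^^ r) ` level_orbit r"
  then obtain j where "y = (level_perm ^^ r) ((level_perm ^^ (r * j)) 0)"
    unfolding level_orbit_def by blast
  also have "\<dots> = (level_perm ^^ (r * Suc j)) 0"
    by (simp only: mult_Suc_right funpow_add o_apply)
  finally show "y \<in> level_orbit r"
    unfolding level_orbit_def by blast
qed

lemma aut_pow_in: "h [^]\<^bsub>Aut\<^esub> (j::nat) \<in> carrier Aut"
  by (rule monoid.nat_pow_closed[OF group.is_monoid[OF group_Aut_inf_group[OF odo_plus1_image]] aut])

lemma aut_pow_apply: "x \<in> odometer p \<Longrightarrow> (h [^]\<^bsub>Aut\<^esub> (j::nat)) x = (h ^^ j) x"
  by (simp add: Aut_inf_group_nat_pow[OF aut odo_plus1_image])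

lemma cylinder_shift_commute_aut_pow:
  assumes "B \<subseteq> {..<p m}" "(level_perm ^^ j) ` B \<subseteq> B"
  shows "restrict (cylinder_shift p m B (k * p m)) (odometer p) \<otimes>\<^bsub>Aut\<^esub> h [^]\<^bsub>Aut\<^esub> j =
    h [^]\<^bsub>Aut\<^esub> j \<otimes>\<^bsub>Aut\<^esub> restrict (cylinder_shift p m B (k * p m)) (odometer p)"
  unfolding Aut_inf_group_commute_iff[OF cylinder_shift_in_Aut_inf[OF dvd_triv_right] aut_pow_in]
  using funpow_commute_cylinder_shift[OF assms] funpow_closed[OF aut_image] cylinder_shift_in
  by (simp add: aut_pow_apply)

lemma plus1_funpow_commute_aut_pow:
  "restrict (odo_plus1 p ^^ k) (odometer p) \<otimes>\<^bsub>Aut\<^esub> h [^]\<^bsub>Aut\<^esub> (j::nat) =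
    h [^]\<^bsub>Aut\<^esub> j \<otimes>\<^bsub>Aut\<^esub> restrict (odo_plus1 p ^^ k) (odometer p)"
  unfolding Aut_inf_group_commute_iff[OF plus1_funpow_in_Aut_inf aut_pow_in]
  using funpow_commute_plus1_funpow[of _ j 1] funpow_closed[OF aut_image] odo_plus1_funpow_in
  by (simp add: aut_pow_apply)

lemma period_dvd_if_commute_cylinder_shift:
  assumes r: "prime r" and k: "k \<ge> 1"
    and hw: "\<And>x. x \<in> odometer p \<Longrightarrow>
      h (cylinder_shift p m (level_orbit r) (k * p m) x) = cylinder_shift p m (level_orbit r) (k * p m) (h x)"
    and tw: "\<And>x. x \<in> odometer p \<Longrightarrow>
      (odo_plus1 p ^^ k) (cylinder_shift p m (level_orbit r) (k * p m) x) =
      cylinder_shift p m (level_orbit r) (k * p m) ((odo_plus1 p ^^ k) x)"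
  obtains N where "\<not> r dvd N" "p m dvd N * k"
proof -
  have c: "k * p m \<ge> 1" using k scale_pos[of m] by simp
  have zero: "(\<lambda>n. 0) \<in> odometer p" "(\<lambda>n. 0) m \<in> level_orbit r"
    using odometer_zero unfolding level_orbit_def by (auto intro: range_eqI[of _ _ 0])
  have "h (\<lambda>n. 0) m \<in> level_orbit r"
    using cylinder_shift_commute_imp_mem[where g = h, OF c aut_image _ hw zero]
      funpow_commute_plus1_funpow[of _ 1 "p m"] by simp
  then obtain j0 where "level_perm 0 = (level_perm ^^ (r * j0)) 0"
    unfolding level_orbit_def level_perm_def odo_of_nat_def by auto
  then obtain N where N: "\<not> r dvd N" "(level_perm ^^ N) 0 = 0"
    using funpow_return_not_dvd[OF bij_betw_level_perm _ r] scale_pos by blast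
  have "(odo_plus1 p ^^ k) (\<lambda>n. 0) m \<in> level_orbit r"
  proof (rule cylinder_shift_commute_imp_mem[where g = "odo_plus1 p ^^ k", OF c _ _ tw zero])
    show "(odo_plus1 p ^^ k) ` odometer p \<subseteq> odometer p"
      using odo_plus1_funpow_in by blast
  qed (rule funpow_swap)
  then obtain j1 where "k mod p m = (level_perm ^^ (r * j1)) 0"
    using odo_plus1_funpow[OF zero(1)] unfolding level_orbit_def by auto
  then have "p m dvd N * k"
    using rotation_commuting_period_dvd[OF scale_pos _ level_perm_rotate _ N(2)]
      bij_betw_level_perm by (auto dest: bij_betwE)
  then show ?thesis using that N(1) by blast
qed

lemma not_abelian_centralizer_power:
  assumes r: "prime r" and k: "k \<ge> 1" and rm: "r ^ Suc (multiplicity r k) dvd p m"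
  shows "\<not> abelian_centralizer Aut (h [^]\<^bsub>Aut\<^esub> r)"
proof
  define shift where "shift = cylinder_shift p m (level_orbit r) (k * p m)"
  define w where "w = restrict shift (odometer p)"
  define t where "t = restrict (odo_plus1 p ^^ k) (odometer p)"
  have G: "h \<in> carrier Aut" "w \<in> carrier Aut" "t \<in> carrier Aut"
    unfolding w_def t_def shift_def
    using aut cylinder_shift_in_Aut_inf[OF dvd_triv_right] plus1_funpow_in_Aut_inf by auto
  have M: "monoid Aut"
    by (rule group.is_monoid[OF group_Aut_inf_group[OF odo_plus1_image]])
  have hr: "h \<otimes>\<^bsub>Aut\<^esub> h [^]\<^bsub>Aut\<^esub> r = h [^]\<^bsub>Aut\<^esub> r \<otimes>\<^bsub>Aut\<^esub> h"
    using monoid.nat_pow_Suc2[OF M aut, of r] monoid.nat_pow_Suc[OF M, of h r] by simp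
  have wr: "w \<otimes>\<^bsub>Aut\<^esub> h [^]\<^bsub>Aut\<^esub> r = h [^]\<^bsub>Aut\<^esub> r \<otimes>\<^bsub>Aut\<^esub> w"
    unfolding w_def shift_def by (rule cylinder_shift_commute_aut_pow[OF level_orbit_subset level_orbit_invariant])
  have tr: "t \<otimes>\<^bsub>Aut\<^esub> h [^]\<^bsub>Aut\<^esub> r = h [^]\<^bsub>Aut\<^esub> r \<otimes>\<^bsub>Aut\<^esub> t"
    unfolding t_def by (rule plus1_funpow_commute_aut_pow)
  assume ab: "abelian_centralizer Aut (h [^]\<^bsub>Aut\<^esub> r)"
  have "\<forall>x\<in>odometer p. h (w x) = w (h x)"
    using ab[unfolded abelian_centralizer_def, rule_format, OF G(1,2) hr wr] Aut_inf_group_commute_iff[OF G(1,2)]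
    by blast
  then have hw: "h (shift x) = shift (h x)" if "x \<in> odometer p" for x
    using that aut_in[OF that] by (simp add: w_def)
  have "\<forall>x\<in>odometer p. t (w x) = w (t x)"
    using ab[unfolded abelian_centralizer_def, rule_format, OF G(3,2) tr wr] Aut_inf_group_commute_iff[OF G(3,2)]
    by blast
  then have tw: "(odo_plus1 p ^^ k) (shift x) = shift ((odo_plus1 p ^^ k) x)" if "x \<in> odometer p" for x
    using that odo_plus1_funpow_in[OF that] cylinder_shift_in[OF that, of m "level_orbit r" "k * p m"]
    unfolding w_def t_def shift_def by (metis restrict_apply')
  obtain N where "\<not> r dvd N" "p m dvd N * k"
    using period_dvd_if_commute_cylinder_shift[OF r k] hw tw unfolding shift_def by blast
  then show False
    using prime_power_multiplicity_not_dvd[OF r] rm k dvd_trans by (metis not_one_le_zero)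
qed

end

context odometer_scale
begin

lemma not_abelian_power_centralizer_if_prime_powers_dvd:
  assumes r: "prime r" and pow: "\<And>e. \<exists>n. r ^ e dvd p n"
  shows "\<not> abelian_power_centralizer r Aut"
  unfolding abelian_power_centralizer_def
proof (intro notI, elim bexE)
  fix h assume h: "h \<in> carrier Aut" and ab: "abelian_centralizer Aut (h [^]\<^bsub>Aut\<^esub> r)"
  obtain k where k: "k \<ge> 1" and hT: "\<And>x. x \<in> odometer p \<Longrightarrow> h ((odo_plus1 p ^^ k) x) = (odo_plus1 p ^^ k) (h x)"
    using Aut_inf_group_carrierE[OF h] by metis
  obtain m where stable: "\<And>M. M \<ge> m \<Longrightarrow> gcd k (p M) = gcd k (p m)"
    and rm: "r ^ Suc (multiplicity r k) dvd p m"
    using exists_stable_level[OF k] pow by metis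
  interpret odometer_aut p h k m
    using h hT stable by unfold_locales
  show False
    using not_abelian_centralizer_power[OF r k rm] ab by blast
qed

end

section \<open>Recovering the odometer from its prime divisors\<close>

definition scale_primes :: "(nat \<Rightarrow> nat) \<Rightarrow> nat set" where
  "scale_primes p = {r. prime r \<and> (\<exists>n. r dvd p n)}"

definition odo_reindex :: "(nat \<Rightarrow> nat) \<Rightarrow> (nat \<Rightarrow> nat) \<Rightarrow> (nat \<Rightarrow> nat) \<Rightarrow> nat \<Rightarrow> nat" where
  "odo_reindex q N x = (\<lambda>n. x (N n) mod q n)"

lemma odo_reindex_add:
  assumes "\<And>n. q n dvd p (N n)"
  shows "odo_reindex q N (odo_add p x y) = odo_add q (odo_reindex q N x) (odo_reindex q N y)"
  using assms by (simp add: odo_reindex_def odo_add_def mod_mod_cancel mod_add_eq)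

context odometer_scale
begin

lemma torsion_free_prime_powers_dvd:
  assumes tf: "torsion_free p" and r: "prime r" and "r dvd p n"
  shows "\<exists>n. r ^ e dvd p n"
proof -
  have "1 \<le> multiplicity r (p n)"
    using assms(2,3) scale_pos[of n] by (intro multiplicity_geI) auto
  then have "enat 1 \<le> enat (multiplicity r (p n))"
    by simp
  also have "\<dots> \<le> scale_val r p"
    unfolding scale_val_def by (rule SUP_upper) simp
  finally have "scale_val r p \<noteq> 0"
    by (auto simp: zero_enat_def)
  then have "scale_val r p = \<infinity>"
    using tf r unfolding torsion_free_def by blast
  then have "enat e < scale_val r p" by simp
  then obtain n' where "enat e < enat (multiplicity r (p n'))"
    unfolding scale_val_def less_SUP_iff by blast
  then show ?thesis using multiplicity_dvd'[of e r "p n'"] by auto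
qed

lemma abelian_power_centralizer_iff:
  assumes "torsion_free p" "prime r"
  shows "abelian_power_centralizer r Aut \<longleftrightarrow> r \<notin> scale_primes p"
proof (cases "r \<in> scale_primes p")
  case True
  then show ?thesis
    using not_abelian_power_centralizer_if_prime_powers_dvd[OF assms(2)]
      torsion_free_prime_powers_dvd[OF assms] unfolding scale_primes_def by blast
next
  case False
  then have "coprime r (p n)" for n
    using assms(2) prime_imp_coprime unfolding scale_primes_def by blast
  then show ?thesis
    using abelian_power_centralizer_if_coprime False by blast
qed

lemma scale_dvd_if_primes_subset:
  assumes Q: "odometer_scale q" "torsion_free q" and sub: "scale_primes p \<subseteq> scale_primes q"
  shows "\<exists>m. p n dvd q m"
proof -
  interpret Q: odometer_scale q by fact
  let ?F = "prime_factors (p n)"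
  have pn: "p n \<noteq> 0" using scale_pos[of n] by simp
  have "\<exists>m. r ^ multiplicity r (p n) dvd q m" if "r \<in> ?F" for r
  proof -
    have "r \<in> scale_primes q"
      using that sub pn unfolding scale_primes_def by auto
    then show ?thesis
      using Q.torsion_free_prime_powers_dvd[OF Q(2)] unfolding scale_primes_def by blast
  qed
  then obtain f where f: "\<And>r. r \<in> ?F \<Longrightarrow> r ^ multiplicity r (p n) dvd q (f r)" by metis
  define M where "M = Max (insert 0 (f ` ?F))"
  have "multiplicity r (p n) \<le> multiplicity r (q M)" if r: "prime r" for r
  proof (cases "r \<in> ?F")
    case True
    then have "f r \<le> M" unfolding M_def by simp
    then have "r ^ multiplicity r (p n) dvd q M"
      using f[OF True] Q.scale_dvd_mono dvd_trans by blast
    then show ?thesis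
      using r Q.scale_pos[of M] by (intro multiplicity_geI) auto
  next
    case False
    then show ?thesis
      using r pn by (simp add: in_prime_factors_iff not_dvd_imp_multiplicity_0)
  qed
  then show ?thesis
    using multiplicity_le_imp_dvd[OF pn] by blast
qed

lemma odo_reindex_in:
  assumes "odometer_scale q" "\<And>n. q n dvd p (N n)" "x \<in> odometer p"
  shows "odo_reindex q N x \<in> odometer q"
proof -
  interpret Q: odometer_scale q by fact
  have "x (N (Suc n)) mod q (Suc n) mod q n = x (N n) mod q n" for n
    using Q.scale_dvd_mono[of n "Suc n"] assms(2) odometer_mod_eq[OF assms(3)]
    by (metis dvd_trans le_SucI order_refl mod_mod_cancel)
  then show ?thesis
    unfolding odometer_def odo_reindex_def using Q.scale_pos by auto
qed

lemma odo_reindex_cancel: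
  assumes "\<And>n. q n dvd p (N n)" "\<And>n. p n dvd q (M n)" "x \<in> odometer p"
  shows "odo_reindex p M (odo_reindex q N x) = x"
proof
  fix n
  have "odo_reindex p M (odo_reindex q N x) n = x (N (M n)) mod p n"
    using assms(2) by (simp add: odo_reindex_def mod_mod_cancel)
  also have "\<dots> = x n mod p n"
    using assms(1,2) by (intro odometer_mod_eq[OF assms(3)]) (auto intro: dvd_trans)
  finally show "odo_reindex p M (odo_reindex q N x) n = x n"
    using odometer_less[OF assms(3)] by simp
qed

lemma odo_group_iso_if_cofinal:
  assumes Q: "odometer_scale q" and "\<And>n. \<exists>m. q n dvd p m" "\<And>n. \<exists>m. p n dvd q m"
  shows "odo_group p \<cong> odo_group q"
proof -
  interpret Q: odometer_scale q by fact
  obtain N M where N: "\<And>n. q n dvd p (N n)" and M: "\<And>n. p n dvd q (M n)"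
    using assms(2,3) by metis
  have "bij_betw (odo_reindex q N) (odometer p) (odometer q)"
    by (rule bij_betw_byWitness[where f' = "odo_reindex p M"])
       (use odo_reindex_cancel[where q = q, OF N M] Q.odo_reindex_cancel[where q = p, OF M N]
          odo_reindex_in[OF Q N] Q.odo_reindex_in[OF odometer_scale_axioms M] in auto)
  moreover from this have "odo_reindex q N \<in> hom (odo_group p) (odo_group q)"
    unfolding hom_def odo_group_def
    by (auto simp: odo_reindex_add[where q = q and p = p, OF N] bij_betw_def)
  ultimately show ?thesis
    unfolding is_iso_def iso_def odo_group_def by auto
qed

end

theorem theorem1p4:
  fixes p q :: "nat \<Rightarrow> nat"
  assumes "is_scale p" and "is_scale q"
    and "torsion_free p" and "torsion_free q"
    and "Aut_inf_group (odometer p) (odo_plus1 p) \<cong> Aut_inf_group (odometer q) (odo_plus1 q)"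
  shows "odo_group p \<cong> odo_group q"
proof -
  interpret P: odometer_scale p by unfold_locales fact
  interpret Q: odometer_scale q by unfold_locales fact
  have groups: "group (Aut_inf_group (odometer p) (odo_plus1 p))" "group (Aut_inf_group (odometer q) (odo_plus1 q))"
    by (simp_all add: group_Aut_inf_group P.odo_plus1_image Q.odo_plus1_image)
  have "abelian_power_centralizer r (Aut_inf_group (odometer p) (odo_plus1 p)) \<longleftrightarrow>
    abelian_power_centralizer r (Aut_inf_group (odometer q) (odo_plus1 q))" for r
    using abelian_power_centralizer_iso[OF groups] abelian_power_centralizer_iso[OF groups(2,1)]
      assms(5) group.iso_sym[OF groups(1)] by blast
  then have "scale_primes p = scale_primes q"
    using P.abelian_power_centralizer_iff[OF assms(3)] Q.abelian_power_centralizer_iff[OF assms(4)]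
    unfolding scale_primes_def by blast
  then show ?thesis
    using P.odo_group_iso_if_cofinal[OF Q.odometer_scale_axioms]
      P.scale_dvd_if_primes_subset[OF Q.odometer_scale_axioms assms(4)]
      Q.scale_dvd_if_primes_subset[OF P.odometer_scale_axioms assms(3)] by blast
qed

end
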